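(* Let $X_t\subset X_{t+p}$ be finite simplicial complexes with oriented simplices (orientations on $X_t$ inherited), whose vertices $v_i$ carry nonzero real labels $q_i$, and let $F$ be a nowhere-zero real function on the simplices of $X_{t+p}$. Let $\mathscr{S}_{t+p}$ be the labeled sheaf on $X_{t+p}$ determined by $(q_i)$ and $F$, and $\mathscr{S}_t$ its pullback (equivalently, the labeled sheaf on $X_t$ determined by the same data). Let $c$ be a nonzero real number, and let $\mathscr{S}'_{t+p},\mathscr{S}'_t$ be the sheaves obtained in the same way after replacing every label $q_i$ by $c\,q_i$. Then the spectrum of every persistent sheaf Laplacian $\Delta_q^{t,p}$ for the primed sheaves is obtained from that of the unprimed sheaves by multiplying every eigenvalue by $c^2$.
   Context: Labeled sheaf: every stalk is $\mathbb{R}$ (standard inner product, distinct stalks orthogonal), and for a face relation $\sigma=[v_0,\dots,v_n]\leqslant\tau=[v_0,\dots,v_n,v_{n+1},\dots,v_m]$ the restriction map is multiplication by $F(\sigma)\,q_{n+1}\cdots q_m/F(\tau)$ (product of labels of the vertices of $\tau$ not in $\sigma$). The pullback to $X_t$ has the same stalks and restriction maps on $X_t$. $C^q(X;\mathscr{S})=\bigoplus_{\dim\sigma=q}\mathscr{S}(\sigma)$, and $C^q(X_t;\mathscr{S}_t)$ is the subspace of $C^q(X_{t+p};\mathscr{S}_{t+p})$ spanned by stalks over simplices of $X_t$. Signed incidence: for $\tau=[v_0,\dots,v_n]$, $\sigma=[v_0,\dots,\hat v_i,\dots,v_n]$, $[\sigma:\tau]=(-1)^i$ (or $(-1)^{i+1}$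 if $\sigma$ oppositely oriented), $0$ if not a codimension-one face. Coboundary $d_q|_{\mathscr{S}(\sigma)}=\sum_{\sigma\leqslant\tau}[\sigma:\tau]\mathscr{S}_{\sigma\leqslant\tau}$; $d^t,d^{t+p}$ denote those of the two complexes. With $\mathbb{C}^{t,p}_{q+1}=\{e\in C^{q+1}(X_{t+p};\mathscr{S}_{t+p}) : (d_q^{t+p})^*(e)\in C^q(X_t;\mathscr{S}_t)\}$ and $\eth_q^{t,p}$ the adjoint of $(d_q^{t+p})^*|_{\mathbb{C}^{t,p}_{q+1}}$, the persistent sheaf Laplacian is $\Delta_q^{t,p}=(\eth_q^{t,p})^*\eth_q^{t,p}+d_{q-1}^t(d_{q-1}^t)^*$ on $C^q(X_t;\mathscr{S}_t)$. *)

theory Defs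
  imports "HOL-Analysis.Analysis" "HOL-Library.Function_Algebras"
begin

text \<open>An oriented simplex is a list of distinct vertices; the order of the list is its orientation. The dimension of a simplex s is length s - 1.\<close>

definition simplicial_complex :: "'v list set \<Rightarrow> bool" where
  "simplicial_complex K \<longleftrightarrow> finite K
     \<and> (\<forall>s\<in>K. s \<noteq> [] \<and> distinct s)
     \<and> (\<forall>s\<in>K. \<forall>s'\<in>K. set s = set s' \<longrightarrow> s = s')
     \<and> (\<forall>s\<in>K. \<forall>A. A \<noteq> {} \<and> A \<subseteq> set s \<longrightarrow> (\<exists>s'\<in>K. set s' = A))"

definition vertices :: "'v list set \<Rightarrow> 'v set" where
  "vertices K = (\<Union>s\<in>K. set s)"

definition pos :: "'v list \<Rightarrow> 'v \<Rightarrow> nat" where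
  "pos ys x = (THE k. k < length ys \<and> ys ! k = x)"

definition perm_sign :: "'v list \<Rightarrow> 'v list \<Rightarrow> real" where
  "perm_sign xs ys = (-1) ^ card {(i, j). i < j \<and> j < length xs \<and> pos ys (xs ! j) < pos ys (xs ! i)}"

text \<open>Signed incidence [sigma : tau]: if tau = [v0,...,vn] and sigma is the face obtained by
  deleting v_i, it is (-1)^i, times -1 if sigma is oppositely oriented; 0 otherwise.\<close>
definition incidence :: "'v list \<Rightarrow> 'v list \<Rightarrow> real" where
  "incidence \<sigma> \<tau> =
     (if length \<tau> = length \<sigma> + 1 \<and> set \<sigma> \<subseteq> set \<tau> then
        (let i = (THE i. i < length \<tau> \<and> \<tau> ! i \<notin> set \<sigma>);
             \<tau>' = take i \<tau> @ drop (Suc i) \<tau>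
         in (-1) ^ i * perm_sign \<sigma> \<tau>')
      else 0)"

definition labeled_restr :: "('v \<Rightarrow> real) \<Rightarrow> ('v list \<Rightarrow> real) \<Rightarrow> 'v list \<Rightarrow> 'v list \<Rightarrow> real" where
  "labeled_restr lab F \<sigma> \<tau> = F \<sigma> * (\<Prod>v\<in>set \<tau> - set \<sigma>. lab v) / F \<tau>"

text \<open>Cochains are functions on oriented simplices (each stalk is R); C^q(K) consists of those
  supported on the q-simplices of K.\<close>
definition cochains :: "'v list set \<Rightarrow> nat \<Rightarrow> ('v list \<Rightarrow> real) set" where
  "cochains K q = {f. \<forall>s. f s \<noteq> 0 \<longrightarrow> s \<in> K \<and> length s = q + 1}"

definition ip :: "'v list set \<Rightarrow> ('v list \<Rightarrow> real) \<Rightarrow> ('v list \<Rightarrow> real) \<Rightarrow> real" where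
  "ip S f g = (\<Sum>s\<in>S. f s * g s)"

definition coboundary :: "'v list set \<Rightarrow> ('v list \<Rightarrow> 'v list \<Rightarrow> real) \<Rightarrow> nat
    \<Rightarrow> ('v list \<Rightarrow> real) \<Rightarrow> ('v list \<Rightarrow> real)" where
  "coboundary K \<rho> q f = (\<lambda>\<tau>. if \<tau> \<in> K \<and> length \<tau> = q + 2
      then (\<Sum>\<sigma>\<in>{\<sigma>\<in>K. length \<sigma> = q + 1}. incidence \<sigma> \<tau> * \<rho> \<sigma> \<tau> * f \<sigma>) else 0)"

definition adjoint_on :: "'v list set \<Rightarrow> ('v list \<Rightarrow> real) set
    \<Rightarrow> (('v list \<Rightarrow> real) \<Rightarrow> ('v list \<Rightarrow> real)) \<Rightarrow> ('v list \<Rightarrow> real) \<Rightarrow> ('v list \<Rightarrow> real)" where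
  "adjoint_on S W T g = (THE h. h \<in> W \<and> (\<forall>f\<in>W. ip S h f = ip S g (T f)))"

text \<open>Xt \<subseteq> Xtp, sheaf restriction maps rho (the same on both complexes: pullback),
  degree q. Ambient inner product sums over Xtp.\<close>

definition pers_space :: "'v list set \<Rightarrow> 'v list set \<Rightarrow> ('v list \<Rightarrow> 'v list \<Rightarrow> real) \<Rightarrow> nat
    \<Rightarrow> ('v list \<Rightarrow> real) set" where
  "pers_space Xt Xtp \<rho> q =
     {e \<in> cochains Xtp (q + 1).
        adjoint_on Xtp (cochains Xtp q) (coboundary Xtp \<rho> q) e \<in> cochains Xt q}"

definition eth :: "'v list set \<Rightarrow> 'v list set \<Rightarrow> ('v list \<Rightarrow> 'v list \<Rightarrow> real) \<Rightarrow> nat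
    \<Rightarrow> ('v list \<Rightarrow> real) \<Rightarrow> ('v list \<Rightarrow> real)" where
  "eth Xt Xtp \<rho> q = adjoint_on Xtp (pers_space Xt Xtp \<rho> q)
      (adjoint_on Xtp (cochains Xtp q) (coboundary Xtp \<rho> q))"

text \<open>Delta_q^{t,p} = eth^* eth + d_{q-1}^t (d_{q-1}^t)^*  on C^q(Xt);
  the second term is absent for q = 0 (C^{-1} = 0).\<close>
definition pers_laplacian :: "'v list set \<Rightarrow> 'v list set \<Rightarrow> ('v list \<Rightarrow> 'v list \<Rightarrow> real) \<Rightarrow> nat
    \<Rightarrow> ('v list \<Rightarrow> real) \<Rightarrow> ('v list \<Rightarrow> real)" where
  "pers_laplacian Xt Xtp \<rho> q f =
     adjoint_on Xtp (cochains Xt q) (eth Xt Xtp \<rho> q) (eth Xt Xtp \<rho> q f)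
     + (if q = 0 then 0 else
          coboundary Xt \<rho> (q - 1)
            (adjoint_on Xtp (cochains Xt (q - 1)) (coboundary Xt \<rho> (q - 1)) f))"

definition eigenspace_on :: "('v list \<Rightarrow> real) set \<Rightarrow> (('v list \<Rightarrow> real) \<Rightarrow> ('v list \<Rightarrow> real))
    \<Rightarrow> real \<Rightarrow> ('v list \<Rightarrow> real) set" where
  "eigenspace_on V L mu = {f \<in> V. L f = (\<lambda>s. mu * f s)}"

text \<open>Spectrum of L on V (set of eigenvalues) and multiplicity of an eigenvalue
  (dimension of the eigenspace; L is self-adjoint so this is the algebraic multiplicity).\<close>
definition spectrum_on :: "('v list \<Rightarrow> real) set \<Rightarrow> (('v list \<Rightarrow> real) \<Rightarrow> ('v list \<Rightarrow> real)) \<Rightarrow> real set" where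
  "spectrum_on V L = {mu. \<exists>f\<in>eigenspace_on V L mu. f \<noteq> 0}"

definition eig_mult :: "('v list \<Rightarrow> real) set \<Rightarrow> (('v list \<Rightarrow> real) \<Rightarrow> ('v list \<Rightarrow> real)) \<Rightarrow> real \<Rightarrow> nat" where
  "eig_mult V L mu = vector_space.dim (\<lambda>r f s. r * f s) (eigenspace_on V L mu)"

end

theory Submission
  imports Defs
begin

(* Scaling every label by c multiplies each restriction map between a simplex and a
   codimension-one coface by c, hence every coboundary by c. Adjoints then scale by c too,
   while the persistent subspace C^{t,p}_{q+1} is unchanged, because the condition defining
   it is invariant under rescaling by a nonzero factor. So eth scales by c and both summands
   of the persistent Laplacian scale by c^2, which carries eigenspaces of eigenvalue mu onto
   eigenspaces of eigenvalue c^2 mu. *)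

interpretation rfun: vector_space "\<lambda>r (f :: 'a \<Rightarrow> real) s. r * f s"
  by unfold_locales (auto simp: fun_eq_iff algebra_simps)

interpretation rfun_pair: vector_space_pair
  "\<lambda>r (f :: 'a \<Rightarrow> real) s. r * f s" "\<lambda>r (g :: 'b \<Rightarrow> real) s. r * g s" ..

interpretation rfun_dual: vector_space_pair
  "\<lambda>r (f :: 'a \<Rightarrow> real) s. r * f s" "(*) :: real \<Rightarrow> real \<Rightarrow> real" ..

abbreviation rfun_linear :: "(('a \<Rightarrow> real) \<Rightarrow> 'b \<Rightarrow> real) \<Rightarrow> bool" where
  "rfun_linear \<equiv> Vector_Spaces.linear (\<lambda>r f s. r * f s) (\<lambda>r g s. r * g s)"

abbreviation rfun_functional :: "(('a \<Rightarrow> real) \<Rightarrow> real) \<Rightarrow> bool" where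
  "rfun_functional \<equiv> Vector_Spaces.linear (\<lambda>r f s. r * f s) (*)"

lemma rfun_linearI:
  assumes "\<And>f g. T (f + g) = T f + T g" and "\<And>r f. T (\<lambda>s. r * f s) = (\<lambda>s. r * T f s)"
  shows "rfun_linear T"
  unfolding Vector_Spaces.linear_iff
  using rfun.vector_space_axioms[where 'a='a] rfun.vector_space_axioms[where 'a='b] assms by blast

definition supported_on :: "'a set \<Rightarrow> ('a \<Rightarrow> real) set" where
  "supported_on S = {f. \<forall>s. f s \<noteq> 0 \<longrightarrow> s \<in> S}"

lemma supported_on_mono: "S \<subseteq> T \<Longrightarrow> supported_on S \<subseteq> supported_on T"
  unfolding supported_on_def by blast

lemma subspace_supported_on: "rfun.subspace (supported_on S)"
  unfolding rfun.subspace_def supported_on_def by (auto, metis add.left_neutral)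

lemma supported_on_subset_span_indicators:
  assumes "finite S"
  shows "supported_on S \<subseteq> rfun.span ((\<lambda>s. indicator {s}) ` S)"
  using assms
proof (induction S rule: finite_induct)
  case empty
  have "f = 0" if "f \<in> supported_on {}" for f
    using that by (simp add: supported_on_def fun_eq_iff)
  then show ?case using rfun.span_zero by blast
next
  case (insert a S)
  show ?case
  proof
    fix f assume "f \<in> supported_on (insert a S)"
    then have "f - (\<lambda>s. f a * indicator {a} s) \<in> supported_on S"
      unfolding supported_on_def by (simp add: indicator_def) blast
    then have "f - (\<lambda>s. f a * indicator {a} s) \<in> rfun.span ((\<lambda>s. indicator {s}) ` S)"
      using insert.IH by blast
    then show "f \<in> rfun.span ((\<lambda>s. indicator {s}) ` insert a S)"
      unfolding image_insert rfun.span_breakdown_eq by blast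
  qed
qed

lemma ip_add_left: "ip S (f + g) h = ip S f h + ip S g h"
  unfolding ip_def by (simp add: sum.distrib distrib_right)

lemma ip_add_right: "ip S h (f + g) = ip S h f + ip S h g"
  unfolding ip_def by (simp add: sum.distrib distrib_left)

lemma ip_diff_left: "ip S (f - g) h = ip S f h - ip S g h"
  unfolding ip_def by (simp add: sum_subtractf left_diff_distrib)

lemma ip_scale_left: "ip S (\<lambda>s. a * f s) g = a * ip S f g"
  unfolding ip_def by (simp add: sum_distrib_left mult.assoc)

lemma ip_scale_right: "ip S g (\<lambda>s. a * f s) = a * ip S g f"
  unfolding ip_def by (simp add: sum_distrib_left algebra_simps)

lemma rfun_functional_ip: "rfun_functional (ip S g)"
  by (simp add: Vector_Spaces.linear_iff rfun.vector_space_axioms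
      vector_space_over_itself.vector_space_axioms ip_add_right ip_scale_right)

lemma ip_self_eq_0:
  assumes "finite S" and "f \<in> supported_on S" and "ip S f f = 0"
  shows "f = 0"
proof -
  have "\<forall>s\<in>S. f s * f s = 0"
    using assms(1,3) unfolding ip_def by (subst (asm) sum_nonneg_eq_0_iff) auto
  then show ?thesis
    using assms(2) by (auto simp: supported_on_def fun_eq_iff)
qed

lemma ip_representation_extend:
  assumes "finite S" and "u \<in> supported_on S" and \<phi>: "rfun_functional \<phi>"
    and represents: "\<forall>g\<in>V. ip S h g = \<phi> g" and orthogonal: "\<forall>g\<in>V. ip S u g = 0"
    and "g \<in> V"
  defines "t \<equiv> (\<phi> u - ip S h u) / ip S u u"
  shows "ip S (h + (\<lambda>s. t * u s)) (g + (\<lambda>s. k * u s)) = \<phi> (g + (\<lambda>s. k * u s))"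
proof -
  have on_u: "ip S (h + (\<lambda>s. t * u s)) u = \<phi> u"
  proof (cases "ip S u u = 0")
    case True
    then have "u = 0" using ip_self_eq_0 assms(1,2) by blast
    then show ?thesis using rfun_dual.linear_0[OF \<phi>] by (simp add: ip_def)
  next
    case False
    then show ?thesis unfolding t_def ip_add_left ip_scale_left by simp
  qed
  have on_g: "ip S (h + (\<lambda>s. t * u s)) g = \<phi> g"
    using represents orthogonal \<open>g \<in> V\<close> by (simp add: ip_add_left ip_scale_left)
  show ?thesis
    using on_u on_g
    by (simp add: ip_add_right ip_scale_right rfun_dual.linear_add[OF \<phi>] rfun_dual.linear_scale[OF \<phi>])
qed

lemma span_insert_decompose:
  assumes "p \<in> rfun.span B" and "f \<in> rfun.span (insert b B)"
  obtains g k where "g \<in> rfun.span B" and "f = g + (\<lambda>s. k * (b - p) s)"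
proof -
  obtain k where "f - (\<lambda>s. k * b s) \<in> rfun.span B"
    using assms(2) unfolding rfun.span_breakdown_eq by blast
  then have "f - (\<lambda>s. k * b s) + (\<lambda>s. k * p s) \<in> rfun.span B"
    using assms(1) by (blast intro: rfun.span_add rfun.span_scale)
  moreover have "f = f - (\<lambda>s. k * b s) + (\<lambda>s. k * p s) + (\<lambda>s. k * (b - p) s)"
    by (simp add: fun_eq_iff algebra_simps)
  ultimately show ?thesis using that by blast
qed

lemma ip_representation_span:
  assumes "finite S" and "finite B" and "B \<subseteq> supported_on S" and "rfun_functional \<phi>"
  shows "\<exists>h\<in>rfun.span B. \<forall>f\<in>rfun.span B. ip S h f = \<phi> f"
  using assms(2-4)
proof (induction B arbitrary: \<phi> rule: finite_induct)
  case empty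
  then show ?case using rfun_dual.linear_0 by (auto simp: ip_def zero_fun_def)
next
  case (insert b B)
  have span_B: "rfun.span B \<subseteq> rfun.span (insert b B)"
    by (rule rfun.span_mono) auto
  have B_supported: "B \<subseteq> supported_on S" using insert.prems(1) by simp
  obtain h where h: "h \<in> rfun.span B" "\<forall>f\<in>rfun.span B. ip S h f = \<phi> f"
    using insert.IH[OF B_supported insert.prems(2)] by blast
  obtain p where p: "p \<in> rfun.span B" "\<forall>f\<in>rfun.span B. ip S p f = ip S b f"
    using insert.IH[OF B_supported rfun_functional_ip] by blast
  define u where "u = b - p"
  have u_span: "u \<in> rfun.span (insert b B)"
    unfolding u_def using rfun.span_base[of b] p(1) span_B by (blast intro: rfun.span_diff)
  have "rfun.span B \<subseteq> supported_on S"
    using B_supported by (intro rfun.span_minimal subspace_supported_on)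
  then have u_supported: "u \<in> supported_on S"
    unfolding u_def using insert.prems(1) p(1) subspace_supported_on by (blast intro: rfun.subspace_diff)
  have u_orthogonal: "\<forall>g\<in>rfun.span B. ip S u g = 0"
    using p(2) by (simp add: u_def ip_diff_left)
  have decompose: "\<exists>g\<in>rfun.span B. \<exists>k. f = g + (\<lambda>s. k * u s)" if "f \<in> rfun.span (insert b B)" for f
    using span_insert_decompose[OF p(1) that] unfolding u_def by blast
  define t where "t = (\<phi> u - ip S h u) / ip S u u"
  have "h + (\<lambda>s. t * u s) \<in> rfun.span (insert b B)"
    using h(1) span_B u_span by (blast intro: rfun.span_add rfun.span_scale)
  moreover have "\<forall>f\<in>rfun.span (insert b B). ip S (h + (\<lambda>s. t * u s)) f = \<phi> f"
    using decompose ip_representation_extend[OF assms(1) u_supported insert.prems(2) h(2) u_orthogonal]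
    unfolding t_def by blast
  ultimately show ?case by blast
qed

(* Riesz representation: it supplies the existence that the definite description in
   adjoint_on needs. *)
lemma ip_representation:
  assumes "finite S" and "rfun.subspace W" and "W \<subseteq> supported_on S" and "rfun_functional \<phi>"
  shows "\<exists>h\<in>W. \<forall>f\<in>W. ip S h f = \<phi> f"
proof -
  obtain B where B: "B \<subseteq> W" "rfun.independent B" "W \<subseteq> rfun.span B"
    by (rule rfun.basis_exists)
  have "finite B"
    using rfun.independent_span_bound[OF finite_imageI[OF assms(1)] B(2)] B(1) assms(3)
      supported_on_subset_span_indicators[OF assms(1)] by blast
  moreover have "rfun.span B = W"
    using rfun.span_subspace B(1,3) assms(2) by blast
  ultimately show ?thesis
    using ip_representation_span[OF assms(1) _ _ assms(4)] B(1) assms(3) by blast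
qed

context
  fixes S :: "'v list set" and W :: "('v list \<Rightarrow> real) set"
  assumes finite_S: "finite S" and subspace_W: "rfun.subspace W"
    and W_supported: "W \<subseteq> supported_on S"
begin

lemma adjoint_on_eqI:
  assumes "h \<in> W" and "\<And>f. f \<in> W \<Longrightarrow> ip S h f = ip S g (T f)"
  shows "adjoint_on S W T g = h"
  unfolding adjoint_on_def
proof (rule the_equality)
  show "h \<in> W \<and> (\<forall>f\<in>W. ip S h f = ip S g (T f))" using assms by blast
  fix h' assume h': "h' \<in> W \<and> (\<forall>f\<in>W. ip S h' f = ip S g (T f))"
  have "h' - h \<in> W" using assms(1) h' subspace_W by (blast intro: rfun.subspace_diff)
  moreover have "ip S (h' - h) (h' - h) = 0"
    using h' assms \<open>h' - h \<in> W\<close> by (simp add: ip_diff_left)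
  ultimately have "h' - h = 0" using ip_self_eq_0[OF finite_S] W_supported by blast
  then show "h' = h" by simp
qed

lemma
  assumes "rfun_linear T"
  shows adjoint_on_mem: "adjoint_on S W T g \<in> W"
    and adjoint_on_ip: "f \<in> W \<Longrightarrow> ip S (adjoint_on S W T g) f = ip S g (T f)"
proof -
  have "rfun_functional (ip S g \<circ> T)"
    using Vector_Spaces.linear_compose[OF assms rfun_functional_ip] .
  then obtain h where h: "h \<in> W" "\<forall>f\<in>W. ip S h f = ip S g (T f)"
    using ip_representation[OF finite_S subspace_W W_supported] by fastforce
  then have "adjoint_on S W T g = h" by (blast intro: adjoint_on_eqI)
  then show "adjoint_on S W T g \<in> W" and "f \<in> W \<Longrightarrow> ip S (adjoint_on S W T g) f = ip S g (T f)"
    using h by auto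
qed

lemma linear_adjoint_on:
  assumes "rfun_linear T"
  shows "rfun_linear (adjoint_on S W T)"
proof (rule rfun_linearI)
  fix g1 g2 :: "'v list \<Rightarrow> real"
  show "adjoint_on S W T (g1 + g2) = adjoint_on S W T g1 + adjoint_on S W T g2"
    using adjoint_on_mem[OF assms] adjoint_on_ip[OF assms] subspace_W
    by (intro adjoint_on_eqI) (auto simp: ip_add_left intro: rfun.subspace_add)
next
  fix r and g :: "'v list \<Rightarrow> real"
  show "adjoint_on S W T (\<lambda>s. r * g s) = (\<lambda>s. r * adjoint_on S W T g s)"
    using adjoint_on_mem[OF assms] adjoint_on_ip[OF assms] subspace_W
    by (intro adjoint_on_eqI) (auto simp: ip_scale_left intro: rfun.subspace_scale)
qed

lemma adjoint_on_scaled_operator: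
  assumes "rfun_linear T"
  shows "adjoint_on S W (\<lambda>f s. c * T f s) = (\<lambda>g s. c * adjoint_on S W T g s)"
proof
  fix g
  show "adjoint_on S W (\<lambda>f s. c * T f s) g = (\<lambda>s. c * adjoint_on S W T g s)"
    using adjoint_on_mem[OF assms] adjoint_on_ip[OF assms] subspace_W
    by (intro adjoint_on_eqI) (auto simp: ip_scale_left ip_scale_right intro: rfun.subspace_scale)
qed

end

lemma cochains_eq_supported_on: "cochains K q = supported_on {s \<in> K. length s = q + 1}"
  unfolding cochains_def supported_on_def by simp

lemma subspace_cochains: "rfun.subspace (cochains K q)"
  unfolding cochains_eq_supported_on by (rule subspace_supported_on)

lemma cochains_subset_supported_on: "K \<subseteq> S \<Longrightarrow> cochains K q \<subseteq> supported_on S"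
  unfolding cochains_eq_supported_on by (rule supported_on_mono) blast

lemma linear_coboundary: "rfun_linear (coboundary K \<rho> q)"
  by (rule rfun_linearI)
    (auto simp: coboundary_def fun_eq_iff sum.distrib sum_distrib_left algebra_simps)

lemma incidence_nonzero_imp_facet:
  assumes "incidence \<sigma> \<tau> \<noteq> 0"
  shows "length \<tau> = length \<sigma> + 1 \<and> set \<sigma> \<subseteq> set \<tau>"
proof (rule ccontr)
  assume "\<not> (length \<tau> = length \<sigma> + 1 \<and> set \<sigma> \<subseteq> set \<tau>)"
  then have "incidence \<sigma> \<tau> = 0" unfolding incidence_def by (rule if_not_P)
  with assms show False by contradiction
qed

lemma labeled_restr_scale_labels:
  assumes "distinct \<sigma>" and "distinct \<tau>" and "set \<sigma> \<subseteq> set \<tau>"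
  shows "labeled_restr (\<lambda>v. c * lab v) F \<sigma> \<tau> = c ^ (length \<tau> - length \<sigma>) * labeled_restr lab F \<sigma> \<tau>"
proof -
  have "card (set \<tau> - set \<sigma>) = length \<tau> - length \<sigma>"
    using assms by (simp add: card_Diff_subset distinct_card)
  then show ?thesis
    unfolding labeled_restr_def by (simp add: prod.distrib)
qed

lemma coboundary_scale_labels:
  assumes "simplicial_complex K"
  shows "coboundary K (labeled_restr (\<lambda>v. c * lab v) F) q
    = (\<lambda>f \<tau>. c * coboundary K (labeled_restr lab F) q f \<tau>)"
proof (intro ext)
  fix f \<tau>
  have scaled: "incidence \<sigma> \<tau> * labeled_restr (\<lambda>v. c * lab v) F \<sigma> \<tau> * f \<sigma>
      = c * (incidence \<sigma> \<tau> * labeled_restr lab F \<sigma> \<tau> * f \<sigma>)"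
    if "\<sigma> \<in> K" and "\<tau> \<in> K" for \<sigma>
  proof (cases "incidence \<sigma> \<tau> = 0")
    case False
    moreover have "distinct \<sigma>" "distinct \<tau>"
      using assms that unfolding simplicial_complex_def by auto
    ultimately show ?thesis
      using labeled_restr_scale_labels incidence_nonzero_imp_facet by fastforce
  qed simp
  then have "(\<Sum>\<sigma>\<in>{\<sigma> \<in> K. length \<sigma> = q + 1}. incidence \<sigma> \<tau> * labeled_restr (\<lambda>v. c * lab v) F \<sigma> \<tau> * f \<sigma>)
      = (\<Sum>\<sigma>\<in>{\<sigma> \<in> K. length \<sigma> = q + 1}. c * (incidence \<sigma> \<tau> * labeled_restr lab F \<sigma> \<tau> * f \<sigma>))"
    if "\<tau> \<in> K"
    using that by (intro sum.cong) auto
  then show "coboundary K (labeled_restr (\<lambda>v. c * lab v) F) q f \<tau>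
      = c * coboundary K (labeled_restr lab F) q f \<tau>"
    unfolding coboundary_def by (simp add: sum_distrib_left)
qed

lemma linear_adjoint_coboundary:
  assumes "finite S" and "K \<subseteq> S"
  shows "rfun_linear (adjoint_on S (cochains K q) (coboundary K \<rho> q))"
  using linear_adjoint_on[OF assms(1) subspace_cochains cochains_subset_supported_on[OF assms(2)]
      linear_coboundary] .

lemma adjoint_coboundary_scaled:
  assumes "finite S" and "K \<subseteq> S"
    and "coboundary K \<rho>' q = (\<lambda>f \<tau>. c * coboundary K \<rho> q f \<tau>)"
  shows "adjoint_on S (cochains K q) (coboundary K \<rho>' q)
    = (\<lambda>g s. c * adjoint_on S (cochains K q) (coboundary K \<rho> q) g s)"
  unfolding assms(3)
  using adjoint_on_scaled_operator[OF assms(1) subspace_cochains cochains_subset_supported_on[OF assms(2)]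
      linear_coboundary] .

lemma pers_space_supported: "pers_space Xt Xtp \<rho> q \<subseteq> supported_on Xtp"
  unfolding pers_space_def using cochains_subset_supported_on[OF order_refl] by blast

lemma subspace_pers_space:
  assumes "finite Xtp"
  shows "rfun.subspace (pers_space Xt Xtp \<rho> q)"
proof -
  let ?A = "adjoint_on Xtp (cochains Xtp q) (coboundary Xtp \<rho> q)"
  have "rfun.subspace (?A -` cochains Xt q)"
    using rfun_pair.linear_subspace_vimage[OF linear_adjoint_coboundary[OF assms order_refl]]
      subspace_cochains .
  moreover have "pers_space Xt Xtp \<rho> q = cochains Xtp (q + 1) \<inter> ?A -` cochains Xt q"
    unfolding pers_space_def by blast
  ultimately show ?thesis
    using subspace_cochains rfun.subspace_inter by metis
qed

lemma linear_eth:
  assumes "finite Xtp"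
  shows "rfun_linear (eth Xt Xtp \<rho> q)"
  unfolding eth_def
  using linear_adjoint_on[OF assms subspace_pers_space[OF assms] pers_space_supported
      linear_adjoint_coboundary[OF assms order_refl]] .

lemma pers_space_scaled:
  assumes "finite Xtp" and "c \<noteq> 0"
    and "coboundary Xtp \<rho>' q = (\<lambda>f \<tau>. c * coboundary Xtp \<rho> q f \<tau>)"
  shows "pers_space Xt Xtp \<rho>' q = pers_space Xt Xtp \<rho> q"
proof -
  have "(\<lambda>s. c * g s) \<in> cochains Xt q \<longleftrightarrow> g \<in> cochains Xt q" for g
    using assms(2) by (simp add: cochains_def)
  then show ?thesis
    unfolding pers_space_def adjoint_coboundary_scaled[OF assms(1) order_refl assms(3)] by simp
qed

lemma eth_scaled:
  assumes "finite Xtp" and "c \<noteq> 0"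
    and "coboundary Xtp \<rho>' q = (\<lambda>f \<tau>. c * coboundary Xtp \<rho> q f \<tau>)"
  shows "eth Xt Xtp \<rho>' q = (\<lambda>g s. c * eth Xt Xtp \<rho> q g s)"
  unfolding eth_def pers_space_scaled[OF assms] adjoint_coboundary_scaled[OF assms(1) order_refl assms(3)]
  using adjoint_on_scaled_operator[OF assms(1) subspace_pers_space[OF assms(1)] pers_space_supported
      linear_adjoint_coboundary[OF assms(1) order_refl]] .

lemma pers_laplacian_scaled:
  assumes "finite Xtp" and "Xt \<subseteq> Xtp" and "c \<noteq> 0"
    and up: "coboundary Xtp \<rho>' q = (\<lambda>f \<tau>. c * coboundary Xtp \<rho> q f \<tau>)"
    and down: "coboundary Xt \<rho>' (q - 1) = (\<lambda>f \<tau>. c * coboundary Xt \<rho> (q - 1) f \<tau>)"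
  shows "pers_laplacian Xt Xtp \<rho>' q f = (\<lambda>s. c^2 * pers_laplacian Xt Xtp \<rho> q f s)"
proof -
  let ?C = "cochains Xt q" and ?E = "eth Xt Xtp \<rho> q"
  let ?d = "coboundary Xt \<rho> (q - 1)" and ?d' = "coboundary Xt \<rho>' (q - 1)"
  note adjoint_scaled = adjoint_on_scaled_operator[OF assms(1) subspace_cochains
      cochains_subset_supported_on[OF assms(2)] linear_eth[OF assms(1)]]
  note adjoint_linear = linear_adjoint_on[OF assms(1) subspace_cochains
      cochains_subset_supported_on[OF assms(2)] linear_eth[OF assms(1)]]
  have up_part: "adjoint_on Xtp ?C (eth Xt Xtp \<rho>' q) (eth Xt Xtp \<rho>' q f)
      = (\<lambda>s. c^2 * adjoint_on Xtp ?C ?E (?E f) s)"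
    unfolding eth_scaled[OF assms(1,3) up] adjoint_scaled
    by (simp add: rfun_pair.linear_scale[OF adjoint_linear] power2_eq_square)
  have down_part: "?d' (adjoint_on Xtp (cochains Xt (q - 1)) ?d' f)
      = (\<lambda>s. c^2 * ?d (adjoint_on Xtp (cochains Xt (q - 1)) ?d f) s)"
    unfolding adjoint_coboundary_scaled[OF assms(1,2) down] unfolding down
    by (simp add: rfun_pair.linear_scale[OF linear_coboundary] power2_eq_square)
  show ?thesis
    unfolding pers_laplacian_def up_part down_part by (simp add: fun_eq_iff distrib_left)
qed

lemma eigenspace_on_scaled:
  assumes "\<And>f. L' f = (\<lambda>s. a * L f s)" and "a \<noteq> 0"
  shows "eigenspace_on V L' (a * \<mu>) = eigenspace_on V L \<mu>"
proof -
  have "L' f = (\<lambda>s. a * \<mu> * f s) \<longleftrightarrow> L f = (\<lambda>s. \<mu> * f s)" for f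
  proof -
    have "L' f = (\<lambda>s. a * \<mu> * f s) \<longleftrightarrow> (\<forall>s. a * L f s = a * (\<mu> * f s))"
      by (simp only: assms(1) fun_eq_iff mult.assoc)
    then show ?thesis
      using assms(2) by (simp add: fun_eq_iff)
  qed
  then show ?thesis
    unfolding eigenspace_on_def by blast
qed

lemma spectrum_on_scaled:
  assumes "\<And>f. L' f = (\<lambda>s. a * L f s)" and "a \<noteq> 0"
  shows "spectrum_on V L' = (\<lambda>x. a * x) ` spectrum_on V L"
proof -
  have "eigenspace_on V L' x = eigenspace_on V L (x / a)" for x
    using eigenspace_on_scaled[OF assms, where V = V and \<mu> = "x / a"] assms(2) by simp
  then have spectrum_iff: "x \<in> spectrum_on V L' \<longleftrightarrow> x / a \<in> spectrum_on V L" for x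
    unfolding spectrum_on_def by simp
  show ?thesis
  proof (intro set_eqI iffI)
    fix x assume "x \<in> spectrum_on V L'"
    then have "x / a \<in> spectrum_on V L" using spectrum_iff by blast
    moreover have "x = a * (x / a)" using assms(2) by simp
    ultimately show "x \<in> (\<lambda>x. a * x) ` spectrum_on V L" by (rule rev_image_eqI)
  next
    fix x assume "x \<in> (\<lambda>x. a * x) ` spectrum_on V L"
    then obtain y where "y \<in> spectrum_on V L" and "x = a * y" by blast
    moreover have "a * y / a = y" using assms(2) by simp
    ultimately show "x \<in> spectrum_on V L'" using spectrum_iff by simp
  qed
qed

theorem mainTheorem5:
  fixes Xt Xtp :: "'v list set" and lab :: "'v \<Rightarrow> real" and F :: "'v list \<Rightarrow> real"
    and c :: real and q :: nat
  assumes "simplicial_complex Xt" and "simplicial_complex Xtp" and "Xt \<subseteq> Xtp"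
    and "\<forall>v\<in>vertices Xtp. lab v \<noteq> 0"
    and "\<forall>s\<in>Xtp. F s \<noteq> 0"
    and "c \<noteq> 0"
  shows "spectrum_on (cochains Xt q)
           (pers_laplacian Xt Xtp (labeled_restr (\<lambda>v. c * lab v) F) q)
         = (\<lambda>x. c^2 * x) ` spectrum_on (cochains Xt q) (pers_laplacian Xt Xtp (labeled_restr lab F) q)
       \<and> (\<forall>mu. eig_mult (cochains Xt q) (pers_laplacian Xt Xtp (labeled_restr (\<lambda>v. c * lab v) F) q) (c^2 * mu)
              = eig_mult (cochains Xt q) (pers_laplacian Xt Xtp (labeled_restr lab F) q) mu)"
proof -
  have "finite Xtp"
    using assms(2) by (simp add: simplicial_complex_def)
  have laplacian_scaled:
    "pers_laplacian Xt Xtp (labeled_restr (\<lambda>v. c * lab v) F) q f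
      = (\<lambda>s. c^2 * pers_laplacian Xt Xtp (labeled_restr lab F) q f s)" for f
    by (rule pers_laplacian_scaled[OF \<open>finite Xtp\<close> assms(3,6)
          coboundary_scale_labels[OF assms(2)] coboundary_scale_labels[OF assms(1)]])
  have "c^2 \<noteq> 0"
    using assms(6) by simp
  show ?thesis
    unfolding eig_mult_def spectrum_on_scaled[OF laplacian_scaled \<open>c^2 \<noteq> 0\<close>]
      eigenspace_on_scaled[OF laplacian_scaled \<open>c^2 \<noteq> 0\<close>]
    by simp
qed

end
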